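(* Let $y_0\in E$ and let $u$ be a positive solution of $0=\tfrac12b^2u''+\tilde au'+\eta u-u^2-d\frac{(u')^2}{u}$ on $[y_0,\infty)$ with $u(y)/\eta(y)\to1$ as $y\to\infty$. Assume that on $[y_0,\infty)$ we have $\eta\in C^2$, $\eta>0$, $\Psi\eta\le1$ and $\bar a:=\frac{\tilde a}{\eta}+(b^2-2d)\frac{\eta'}{\eta^2}\le0$. Then either $u>\eta$ for all sufficiently large $y$, or $u\le\eta$ for all sufficiently large $y$. If in addition $\frac{\tilde a}{b^2}\le-C$ on $[y_0,\infty)$ for some constant $C>0$, $\eta(y)\to\infty$ and $\eta(y)e^{-2Cy}\to0$ as $y\to\infty$, then $u\le\eta$ for all sufficiently large $y$.
   Context: $E=(E_-,\infty)$ with $E_-\in\{-\infty\}\cup\mathbb R$. $r,\lambda,\sigma,a,b,\rho,\delta:E\to\mathbb R$ are locally Lipschitz with $\sigma>0$, $b(y)\neq0$, $\rho(y)\in[-1,1]$; $R\in(0,\infty)\setminus\{1\}$. Define $\eta=\frac1R\big(\delta-(1-R)(r+\frac{\lambda^2}{2R})\big)$, $\tilde a=a+\frac{1-R}{R}\rho\lambda b$, $d=\frac12b^2((1-\rho^2)R+\rho^2+1)$, and for positive $g\in C^2$, $\Psi g=1+\frac{\frac12b^2g''+\tilde ag'}{g^2}-d\frac{(g')^2}{g^3}$. *)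

theory Defs
  imports "HOL-Analysis.Analysis"
begin

definition stateE :: "ereal \<Rightarrow> real set" where
  "stateE Em = {y. Em < ereal y}"

definition loc_lipschitz_on :: "real set \<Rightarrow> (real \<Rightarrow> real) \<Rightarrow> bool" where
  "loc_lipschitz_on S f \<longleftrightarrow>
     (\<forall>x\<in>S. \<exists>e>0. \<exists>L. \<forall>y\<in>ball x e \<inter> S. \<forall>z\<in>ball x e \<inter> S. \<bar>f y - f z\<bar> \<le> L * \<bar>y - z\<bar>)"

definition eta_fun ::
  "real \<Rightarrow> (real \<Rightarrow> real) \<Rightarrow> (real \<Rightarrow> real) \<Rightarrow> (real \<Rightarrow> real) \<Rightarrow> real \<Rightarrow> real" where
  "eta_fun R r lam del y = (1 / R) * (del y - (1 - R) * (r y + (lam y)\<^sup>2 / (2 * R)))"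

definition atilde_fun ::
  "real \<Rightarrow> (real \<Rightarrow> real) \<Rightarrow> (real \<Rightarrow> real) \<Rightarrow> (real \<Rightarrow> real) \<Rightarrow> (real \<Rightarrow> real) \<Rightarrow> real \<Rightarrow> real" where
  "atilde_fun R a rho lam b y = a y + ((1 - R) / R) * rho y * lam y * b y"

definition d_fun :: "real \<Rightarrow> (real \<Rightarrow> real) \<Rightarrow> (real \<Rightarrow> real) \<Rightarrow> real \<Rightarrow> real" where
  "d_fun R b rho y = (1/2) * (b y)\<^sup>2 * ((1 - (rho y)\<^sup>2) * R + (rho y)\<^sup>2 + 1)"

text \<open>Psi g = 1 + (b^2 g''/2 + atilde g')/g^2 - d (g')^2/g^3, with g' = g1 and g'' = g2
  supplied explicitly as the first and second derivatives of g.\<close>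
definition Psi_op ::
  "(real \<Rightarrow> real) \<Rightarrow> (real \<Rightarrow> real) \<Rightarrow> (real \<Rightarrow> real) \<Rightarrow> (real \<Rightarrow> real) \<Rightarrow> (real \<Rightarrow> real)
    \<Rightarrow> (real \<Rightarrow> real) \<Rightarrow> real \<Rightarrow> real" where
  "Psi_op b ta d g g1 g2 y =
     1 + ((1/2) * (b y)\<^sup>2 * g2 y + ta y * g1 y) / (g y)\<^sup>2 - d y * (g1 y)\<^sup>2 / (g y) ^ 3"

end

theory Submission
  imports Defs
begin

text \<open>Put w = u / \<eta>. The condition \<Psi>\<eta> \<le> 1 says that \<eta> is a supersolution of the ODE, so at a
  critical point of w where w > 1 the ODE forces u''\<eta> - u\<eta>'' > 0, i.e. w'' > 0. Hence w has no
  local maximum above 1, and u - \<eta> cannot change sign infinitely often.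

  If u > \<eta> eventually and \<eta> \<rightarrow> \<infinity>, then u \<rightarrow> \<infinity>, so u' > 0 somewhere, and wherever u' \<ge> 0
  the ODE gives u'' > 2Cu'. Thus u' e^(-2Cy) is nondecreasing from that point on, u grows at least
  like e^(2Cy), and this contradicts u \<sim> \<eta> = o(e^(2Cy)).\<close>

lemma DERIV2_pos_inc_right:
  fixes f f' :: "real \<Rightarrow> real"
  assumes S: "open S" "s \<in> S"
    and f': "\<And>x. x \<in> S \<Longrightarrow> (f has_real_derivative f' x) (at x)"
    and crit: "f' s = 0"
    and f'': "(f' has_real_derivative D) (at s)" "D > 0"
  shows "\<exists>d>0. \<forall>h>0. h < d \<longrightarrow> f s < f (s + h)"
proof -
  obtain d where d: "d > 0" "\<And>h. h > 0 \<Longrightarrow> h < d \<Longrightarrow> f' s < f' (s + h)"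
    using DERIV_pos_inc_right[OF f''] by blast
  obtain e where e: "e > 0" "ball s e \<subseteq> S"
    using S openE by blast
  have "f s < f (s + h)" if h: "0 < h" "h < min d e" for h
  proof (rule DERIV_pos_imp_increasing_open[of s "s + h" f])
    have sub: "{s..s + h} \<subseteq> S"
      using e h by (force simp: dist_real_def)
    show "\<exists>l. (f has_real_derivative l) (at x) \<and> l > 0" if "s < x" "x < s + h" for x
    proof (intro exI conjI)
      show "(f has_real_derivative f' x) (at x)" using sub that by (intro f') auto
      show "f' x > 0" using d(2)[of "x - s"] crit that h by simp
    qed
    show "continuous_on {s..s + h} f"
      using sub f' by (intro continuous_at_imp_continuous_on ballI DERIV_isCont) blast
  qed (use h in simp)
  then show ?thesis
    using d e by (intro exI[of _ "min d e"]) auto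
qed

lemma eventually_gt_or_eventually_le_if_convex_at_critical:
  fixes f f' :: "real \<Rightarrow> real"
  assumes f': "\<And>x. x > a \<Longrightarrow> (f has_real_derivative f' x) (at x)"
    and f'': "\<And>x. x > a \<Longrightarrow> f x > c \<Longrightarrow> f' x = 0 \<Longrightarrow> \<exists>D>0. (f' has_real_derivative D) (at x)"
  shows "(\<forall>\<^sub>F x in at_top. f x > c) \<or> (\<forall>\<^sub>F x in at_top. f x \<le> c)"
proof (rule ccontr)
  assume "\<not> ?thesis"
  then have le: "\<And>M. \<exists>y\<ge>M. f y \<le> c" and gt: "\<And>M. \<exists>y\<ge>M. f y > c"
    unfolding eventually_at_top_linorder by (meson not_le)+
  obtain y1 where y1: "y1 > a" "f y1 \<le> c" using le[of "a + 1"] by force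
  obtain y2 where y2: "y2 > y1" "f y2 > c" using gt[of "y1 + 1"] by force
  obtain y3 where y3: "y3 > y2" "f y3 \<le> c" using le[of "y2 + 1"] by force
  have "continuous_on {y1..y3} f"
    using y1 y2 y3 by (intro continuous_at_imp_continuous_on ballI DERIV_isCont[OF f']) auto
  then obtain s where s: "s \<in> {y1..y3}" "\<And>t. t \<in> {y1..y3} \<Longrightarrow> f t \<le> f s"
    using continuous_attains_sup[of "{y1..y3}" f] y2 y3 by fastforce
  have "f s > c" using s(2)[of y2] y2 y3 by auto
  then have "s \<noteq> y1" "s \<noteq> y3" using y1 y3 by auto
  then have s_inner: "y1 < s" "s < y3" using s(1) by auto
  have "f' s = 0"
  proof (rule DERIV_local_max[OF f'])
    show "\<forall>y. \<bar>s - y\<bar> < min (s - y1) (y3 - s) \<longrightarrow> f y \<le> f s"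
      using s(2) by (auto simp: abs_if)
  qed (use s_inner y1 in auto)
  moreover have "a < s" using s_inner y1 by simp
  ultimately obtain D where "D > 0" "(f' has_real_derivative D) (at s)"
    using f''[of s] \<open>f s > c\<close> by blast
  then obtain d where d: "d > 0" "\<And>h. h > 0 \<Longrightarrow> h < d \<Longrightarrow> f s < f (s + h)"
    using DERIV2_pos_inc_right[of "{a<..}" s f f'] f' \<open>f' s = 0\<close> \<open>a < s\<close> by force
  define h where "h = min (d / 2) (y3 - s)"
  have h: "0 < h" "h < d" "s + h \<le> y3" using d(1) s_inner by (auto simp: h_def)
  then have "f s < f (s + h)" using d(2) by simp
  moreover have "f (s + h) \<le> f s" using s(2)[of "s + h"] s_inner h by simp
  ultimately show False by simp
qed

lemma exists_deriv_pos_if_filterlim_at_top: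
  fixes v v' :: "real \<Rightarrow> real"
  assumes v': "\<And>x. x \<ge> M \<Longrightarrow> (v has_real_derivative v' x) (at x)"
    and lim: "filterlim v at_top at_top"
  shows "\<exists>Y\<ge>M. v' Y > 0"
proof (rule ccontr)
  assume "\<not> ?thesis"
  then have bounded: "v y \<le> v M" if "M \<le> y" for y
    using DERIV_nonpos_imp_nonincreasing[OF that] v' by (meson not_less order_trans)
  have "\<forall>\<^sub>F y in at_top. v M < v y \<and> M \<le> y"
    using lim by (intro eventually_conj) (auto simp: filterlim_at_top_dense)
  then obtain y where "v M < v y" "M \<le> y"
    using eventually_happens'[OF trivial_limit_at_top_linorder] by blast
  with bounded show False by fastforce
qed

lemma ge_start_if_deriv_nonneg_where_pos:
  fixes g g' :: "real \<Rightarrow> real"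
  assumes g': "\<And>x. x \<ge> Y \<Longrightarrow> (g has_real_derivative g' x) (at x)"
    and start: "g Y > 0"
    and g'_nonneg: "\<And>x. x \<ge> Y \<Longrightarrow> g x > 0 \<Longrightarrow> g' x \<ge> 0"
    and y: "Y \<le> y"
  shows "g Y \<le> g y"
proof -
  have pos: "g t > 0" if t: "t \<ge> Y" for t
  proof (rule ccontr)
    assume "\<not> g t > 0"
    define Z where "Z = {Y..t} \<inter> g -` {..0}"
    have "continuous_on {Y..t} g"
      using g' by (intro continuous_at_imp_continuous_on ballI DERIV_isCont) auto
    then have "closed Z"
      unfolding Z_def by (rule continuous_closed_preimage) auto
    moreover have "bounded Z"
      unfolding Z_def by (rule bounded_subset[of "{Y..t}"]) auto
    moreover have "t \<in> Z" using t \<open>\<not> g t > 0\<close> by (simp add: Z_def)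
    ultimately obtain z where z: "z \<in> Z" "\<And>x. x \<in> Z \<Longrightarrow> z \<le> x"
      using compact_attains_inf[of Z] by (auto simp: compact_eq_bounded_closed)
    have "z \<noteq> Y" using z(1) start by (auto simp: Z_def)
    with z(1) have "Y < z" by (simp add: Z_def)
    then obtain \<xi> where \<xi>: "Y < \<xi>" "\<xi> < z" "g z - g Y = (z - Y) * g' \<xi>"
      using MVT2[of Y z g g'] g' by (metis less_eq_real_def order_trans)
    have "\<xi> \<notin> Z" using z(2)[of \<xi>] \<xi>(2) by linarith
    then have "g \<xi> > 0" using \<xi> z(1) by (auto simp: Z_def)
    then have "g' \<xi> \<ge> 0" using g'_nonneg \<xi>(1) by simp
    then have "0 \<le> (z - Y) * g' \<xi>" using \<open>Y < z\<close> by simp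
    then have "g Y \<le> g z" using \<xi>(3) by linarith
    then show False using z(1) start by (simp add: Z_def)
  qed
  show ?thesis
  proof (rule DERIV_nonneg_imp_nondecreasing[OF y])
    fix x assume "Y \<le> x" "x \<le> y"
    with g' g'_nonneg pos show "\<exists>l. (g has_real_derivative l) (at x) \<and> 0 \<le> l"
      by blast
  qed
qed

lemma deriv_exp_lower_bound_if_deriv2_ge:
  fixes v' v'' :: "real \<Rightarrow> real"
  assumes v'': "\<And>x. x \<ge> Y \<Longrightarrow> (v' has_real_derivative v'' x) (at x)"
    and start: "v' Y > 0"
    and growth: "\<And>x. x \<ge> Y \<Longrightarrow> v' x > 0 \<Longrightarrow> 2 * C * v' x \<le> v'' x"
    and y: "Y \<le> y"
  shows "v' Y * exp (- 2 * C * Y) * exp (2 * C * y) \<le> v' y"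
proof -
  have "v' Y * exp (- 2 * C * Y) \<le> v' y * exp (- 2 * C * y)"
  proof (rule ge_start_if_deriv_nonneg_where_pos[OF _ _ _ y])
    show "((\<lambda>y. v' y * exp (- 2 * C * y)) has_real_derivative
            (v'' x - 2 * C * v' x) * exp (- 2 * C * x)) (at x)" if "Y \<le> x" for x
      using that by (auto intro!: derivative_eq_intros v'' simp: algebra_simps)
    show "0 \<le> (v'' x - 2 * C * v' x) * exp (- 2 * C * x)"
      if "Y \<le> x" "v' x * exp (- 2 * C * x) > 0" for x
      using growth[of x] that by (simp add: zero_less_mult_iff)
  qed (use start in simp)
  then have "v' Y * exp (- 2 * C * Y) * exp (2 * C * y) \<le> v' y * exp (- 2 * C * y) * exp (2 * C * y)"
    by (rule mult_right_mono) simp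
  then show ?thesis by (simp add: mult.assoc flip: exp_add)
qed

lemma exp_lower_bound_if_deriv2_ge:
  fixes v v' v'' :: "real \<Rightarrow> real"
  assumes v': "\<And>x. x \<ge> Y \<Longrightarrow> (v has_real_derivative v' x) (at x)"
    and v'': "\<And>x. x \<ge> Y \<Longrightarrow> (v' has_real_derivative v'' x) (at x)"
    and C: "C > 0" and start: "v' Y > 0"
    and growth: "\<And>x. x \<ge> Y \<Longrightarrow> v' x > 0 \<Longrightarrow> 2 * C * v' x \<le> v'' x"
  shows "\<exists>c>0. \<forall>\<^sub>F y in at_top. c * exp (2 * C * y) \<le> v y"
proof -
  define c where "c = v' Y * exp (- 2 * C * Y)"
  have "c > 0" using start by (simp add: c_def)
  have v'_ge: "c * exp (2 * C * y) \<le> v' y" if "Y \<le> y" for y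
    unfolding c_def using deriv_exp_lower_bound_if_deriv2_ge[OF v'' start growth that] .
  define k where "k = c / (2 * C)"
  have v_ge: "v Y - k * exp (2 * C * Y) + k * exp (2 * C * y) \<le> v y" if "Y \<le> y" for y
  proof -
    have "v Y - k * exp (2 * C * Y) \<le> v y - k * exp (2 * C * y)"
    proof (rule DERIV_nonneg_imp_nondecreasing[OF that])
      fix x assume x: "Y \<le> x" "x \<le> y"
      have "((\<lambda>y. v y - k * exp (2 * C * y)) has_real_derivative v' x - c * exp (2 * C * x)) (at x)"
        using x C by (auto intro!: derivative_eq_intros v' simp: k_def)
      then show "\<exists>l. ((\<lambda>y. v y - k * exp (2 * C * y)) has_real_derivative l) (at x) \<and> 0 \<le> l"
        using v'_ge[of x] x by force
    qed
    then show ?thesis by simp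
  qed
  have "k / 2 > 0" using C \<open>c > 0\<close> by (simp add: k_def)
  have "filterlim (\<lambda>y. exp (2 * C * y)) at_top at_top"
    using C by (intro filterlim_compose[OF exp_at_top]
        filterlim_tendsto_pos_mult_at_top[OF tendsto_const _ filterlim_ident]) simp
  then have "filterlim (\<lambda>y. k / 2 * exp (2 * C * y)) at_top at_top"
    by (rule filterlim_tendsto_pos_mult_at_top[OF tendsto_const \<open>k / 2 > 0\<close>])
  then have "\<forall>\<^sub>F y in at_top. k * exp (2 * C * Y) - v Y \<le> k / 2 * exp (2 * C * y)"
    unfolding filterlim_at_top by blast
  then have "\<forall>\<^sub>F y in at_top. k / 2 * exp (2 * C * y) \<le> v y"
    using eventually_ge_at_top[of Y] by eventually_elim (use v_ge in fastforce)
  with \<open>k / 2 > 0\<close> show ?thesis by blast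
qed

lemma not_eventually_gt_if_subexponential:
  fixes u u1 u2 e :: "real \<Rightarrow> real"
  assumes u1: "\<And>x. x > a \<Longrightarrow> (u has_real_derivative u1 x) (at x)"
    and u2: "\<And>x. x > a \<Longrightarrow> (u1 has_real_derivative u2 x) (at x)"
    and C: "C > 0"
    and growth: "\<And>x. x > a \<Longrightarrow> u x > e x \<Longrightarrow> 0 \<le> u1 x \<Longrightarrow> 2 * C * u1 x < u2 x"
    and e_lim: "filterlim e at_top at_top"
    and ratio_lim: "((\<lambda>y. u y / e y) \<longlongrightarrow> 1) at_top"
    and e_small: "((\<lambda>y. e y * exp (- 2 * C * y)) \<longlongrightarrow> 0) at_top"
  shows "\<not> (\<forall>\<^sub>F y in at_top. u y > e y)"
proof
  assume "\<forall>\<^sub>F y in at_top. u y > e y"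
  then obtain N where N: "\<And>y. y \<ge> N \<Longrightarrow> u y > e y"
    unfolding eventually_at_top_linorder by blast
  define M where "M = max N (a + 1)"
  have M: "M > a" "\<And>y. y \<ge> M \<Longrightarrow> u y > e y"
    using N by (auto simp: M_def)
  have "filterlim u at_top at_top"
    using e_lim by (rule filterlim_at_top_mono)
      (use M in \<open>auto simp: eventually_at_top_linorder intro: less_imp_le\<close>)
  then obtain Y where Y: "Y \<ge> M" "u1 Y > 0"
    using exists_deriv_pos_if_filterlim_at_top[of M u u1] u1 M(1) by force
  obtain c where "c > 0" and lower: "\<forall>\<^sub>F y in at_top. c * exp (2 * C * y) \<le> u y"
    using exp_lower_bound_if_deriv2_ge[of Y u u1 u2 C] u1 u2 C Y growth M
    by (force intro: less_imp_le)
  have "((\<lambda>y. u y / e y * (e y * exp (- 2 * C * y))) \<longlongrightarrow> 1 * 0) at_top"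
    by (rule tendsto_mult[OF ratio_lim e_small])
  moreover have "\<forall>\<^sub>F y in at_top. u y / e y * (e y * exp (- 2 * C * y)) = u y * exp (- 2 * C * y)"
    using e_lim[unfolded filterlim_at_top_dense] by (auto elim!: eventually_mono)
  ultimately have "((\<lambda>y. u y * exp (- 2 * C * y)) \<longlongrightarrow> 0) at_top"
    by (simp add: tendsto_cong)
  then have "\<forall>\<^sub>F y in at_top. u y * exp (- 2 * C * y) < c"
    using \<open>c > 0\<close> by (rule order_tendstoD)
  moreover have "\<forall>\<^sub>F y in at_top. c \<le> u y * exp (- 2 * C * y)"
    using lower
  proof eventually_elim
    case (elim y)
    then have "c * exp (2 * C * y) * exp (- 2 * C * y) \<le> u y * exp (- 2 * C * y)"
      by (rule mult_right_mono) simp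
    then show ?case by (simp add: mult.assoc flip: exp_add)
  qed
  ultimately have "\<forall>\<^sub>F y in at_top. u y * exp (- 2 * C * y) < c \<and> c \<le> u y * exp (- 2 * C * y)"
    by (rule eventually_conj)
  then show False
    using eventually_happens'[OF trivial_limit_at_top_linorder] by fastforce
qed

lemma eventually_gt_or_eventually_le_if_tangency_gap:
  fixes u u1 u2 e e1 e2 :: "real \<Rightarrow> real"
  assumes u1: "\<And>x. x > a \<Longrightarrow> (u has_real_derivative u1 x) (at x)"
    and u2: "\<And>x. x > a \<Longrightarrow> (u1 has_real_derivative u2 x) (at x)"
    and e1: "\<And>x. x > a \<Longrightarrow> (e has_real_derivative e1 x) (at x)"
    and e2: "\<And>x. x > a \<Longrightarrow> (e1 has_real_derivative e2 x) (at x)"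
    and e_pos: "\<And>x. x > a \<Longrightarrow> e x > 0"
    and gap: "\<And>x. x > a \<Longrightarrow> u x > e x \<Longrightarrow> u1 x * e x = u x * e1 x \<Longrightarrow> u x * e2 x < u2 x * e x"
  shows "(\<forall>\<^sub>F x in at_top. u x > e x) \<or> (\<forall>\<^sub>F x in at_top. u x \<le> e x)"
proof -
  define w' where "w' x = (u1 x * e x - u x * e1 x) / (e x)\<^sup>2" for x
  have w': "((\<lambda>x. u x / e x) has_real_derivative w' x) (at x)" if "x > a" for x
    unfolding w'_def using e_pos[OF that]
    by (auto intro!: derivative_eq_intros u1 e1 that simp: power2_eq_square)
  have w'': "\<exists>D>0. (w' has_real_derivative D) (at x)"
    if x: "x > a" "u x / e x > 1" "w' x = 0" for x
  proof (intro exI conjI)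
    have "e x > 0" "u x > e x" "u1 x * e x = u x * e1 x"
      using x e_pos[OF x(1)] by (auto simp: w'_def)
    then show "(u2 x * e x - u x * e2 x) / (e x)\<^sup>2 > 0"
      using gap[OF x(1)] by simp
    show "(w' has_real_derivative (u2 x * e x - u x * e2 x) / (e x)\<^sup>2) (at x)"
      unfolding w'_def using \<open>e x > 0\<close> \<open>u1 x * e x = u x * e1 x\<close>
      by (auto intro!: derivative_eq_intros u1 u2 e1 e2 x(1) simp: field_simps power2_eq_square)
  qed
  have iff: "\<forall>\<^sub>F x in at_top. (u x / e x > 1 \<longleftrightarrow> u x > e x)"
    using eventually_gt_at_top[of a] by eventually_elim (use e_pos in simp)
  have "(\<forall>\<^sub>F x in at_top. u x / e x > 1) \<or> (\<forall>\<^sub>F x in at_top. u x / e x \<le> 1)"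
    by (rule eventually_gt_or_eventually_le_if_convex_at_critical[OF w' w''])
  then show ?thesis
  proof
    assume "\<forall>\<^sub>F x in at_top. u x / e x > 1"
    with iff have "\<forall>\<^sub>F x in at_top. u x > e x" by eventually_elim simp
    then show ?thesis ..
  next
    assume "\<forall>\<^sub>F x in at_top. u x / e x \<le> 1"
    with iff have "\<forall>\<^sub>F x in at_top. u x \<le> e x" by eventually_elim force
    then show ?thesis ..
  qed
qed

lemma Psi_op_le_1_imp_supersolution:
  assumes "g y > 0" "Psi_op b ta d g g1 g2 y \<le> 1"
  shows "(1/2) * (b y)\<^sup>2 * g2 y + ta y * g1 y - d y * (g1 y)\<^sup>2 / g y \<le> 0"
proof -
  have eq: "(1/2) * (b y)\<^sup>2 * g2 y + ta y * g1 y - d y * (g1 y)\<^sup>2 / g y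
      = (Psi_op b ta d g g1 g2 y - 1) * (g y)\<^sup>2"
    using assms(1) by (simp add: Psi_op_def field_simps power2_eq_square power3_eq_cube)
  have "(Psi_op b ta d g g1 g2 y - 1) * (g y)\<^sup>2 \<le> 0"
    using assms(2) by (intro mult_nonpos_nonneg) simp_all
  then show ?thesis
    using eq by linarith
qed

lemma ode_tangency_gap_pos:
  fixes u u' u'' e e' e'' B t D :: real
  assumes "e < u" "0 < e" "0 < B"
    and ode: "0 = (1/2) * B * u'' + t * u' + e * u - u\<^sup>2 - D * u'\<^sup>2 / u"
    and super: "(1/2) * B * e'' + t * e' - D * e'\<^sup>2 / e \<le> 0"
    and tangent: "u' * e = u * e'"
  shows "u * e'' < u'' * e"
proof -
  have "0 < u" using assms by linarith
  have u': "u' = u * e' / e"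
    using tangent \<open>0 < e\<close> by (simp add: field_simps)
  have "0 = ((1/2) * B * u'' + t * u' + e * u - u\<^sup>2 - D * u'\<^sup>2 / u) * e"
    using ode by simp
  also have "\<dots> = (1/2) * B * u'' * e + t * u * e' + e\<^sup>2 * u - u\<^sup>2 * e - D * u * e'\<^sup>2 / e"
    using \<open>0 < u\<close> \<open>0 < e\<close> by (simp add: u' field_simps power2_eq_square)
  finally have "(1/2) * B * (u'' * e - u * e'')
      = u * e * (u - e) - u * ((1/2) * B * e'' + t * e' - D * e'\<^sup>2 / e)"
    by (simp add: algebra_simps power2_eq_square)
  moreover have "0 < u * e * (u - e)"
    using assms \<open>0 < u\<close> by simp
  moreover have "u * ((1/2) * B * e'' + t * e' - D * e'\<^sup>2 / e) \<le> 0"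
    using super \<open>0 < u\<close> by (simp add: mult_nonneg_nonpos)
  ultimately have "0 < (1/2) * B * (u'' * e - u * e'')"
    by linarith
  then show ?thesis
    using \<open>0 < B\<close> by (simp add: zero_less_mult_iff)
qed

lemma ode_deriv2_gt_if_drift_le:
  fixes u u' u'' e B t D C :: real
  assumes "e < u" "0 < e" "0 < B" "0 \<le> D" "0 \<le> u'"
    and drift: "t / B \<le> - C"
    and ode: "0 = (1/2) * B * u'' + t * u' + e * u - u\<^sup>2 - D * u'\<^sup>2 / u"
  shows "2 * C * u' < u''"
proof -
  have "t \<le> - C * B" using drift \<open>0 < B\<close> by (simp add: divide_le_eq)
  then have "C * B * u' \<le> - t * u'"
    using \<open>0 \<le> u'\<close> by (intro mult_right_mono) auto
  moreover have "0 \<le> D * u'\<^sup>2 / u" "0 < u\<^sup>2 - e * u"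
    using assms by (simp_all add: power2_eq_square algebra_simps)
  ultimately have "C * B * u' < (1/2) * B * u''"
    using ode by linarith
  then show ?thesis
    using \<open>0 < B\<close> by (simp add: algebra_simps)
qed

lemma d_fun_nonneg:
  assumes "0 \<le> R" "-1 \<le> rho y" "rho y \<le> 1"
  shows "0 \<le> d_fun R b rho y"
proof -
  have "(rho y)\<^sup>2 \<le> 1"
    using assms by (simp add: abs_square_le_1)
  then show ?thesis
    using assms by (simp add: d_fun_def)
qed

locale ode_with_supersolution =
  fixes a :: real and B t D u u' u'' e e' e'' :: "real \<Rightarrow> real"
  assumes u': "x > a \<Longrightarrow> (u has_real_derivative u' x) (at x)"
    and u'': "x > a \<Longrightarrow> (u' has_real_derivative u'' x) (at x)"
    and e': "x > a \<Longrightarrow> (e has_real_derivative e' x) (at x)"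
    and e'': "x > a \<Longrightarrow> (e' has_real_derivative e'' x) (at x)"
    and e_pos: "x > a \<Longrightarrow> 0 < e x"
    and B_pos: "x > a \<Longrightarrow> 0 < B x"
    and D_nonneg: "x > a \<Longrightarrow> 0 \<le> D x"
    and ode: "x > a \<Longrightarrow> 0 = (1/2) * B x * u'' x + t x * u' x + e x * u x - (u x)\<^sup>2 - D x * (u' x)\<^sup>2 / u x"
    and supersolution: "x > a \<Longrightarrow> (1/2) * B x * e'' x + t x * e' x - D x * (e' x)\<^sup>2 / e x \<le> 0"
begin

lemma eventually_gt_or_eventually_le: "(\<forall>\<^sub>F x in at_top. u x > e x) \<or> (\<forall>\<^sub>F x in at_top. u x \<le> e x)"
proof (rule eventually_gt_or_eventually_le_if_tangency_gap[OF u' u'' e' e'' e_pos])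
  fix x assume "a < x" "e x < u x" "u' x * e x = u x * e' x"
  then show "u x * e'' x < u'' x * e x"
    using ode_tangency_gap_pos e_pos B_pos ode supersolution by blast
qed

lemma not_eventually_gt_if_drift_le:
  assumes C: "C > 0" and drift: "\<And>x. x > a \<Longrightarrow> t x / B x \<le> - C"
    and "filterlim e at_top at_top" "((\<lambda>y. u y / e y) \<longlongrightarrow> 1) at_top"
      "((\<lambda>y. e y * exp (- 2 * C * y)) \<longlongrightarrow> 0) at_top"
  shows "\<not> (\<forall>\<^sub>F y in at_top. u y > e y)"
proof (rule not_eventually_gt_if_subexponential[OF u' u'' C _ assms(3-5)])
  fix x assume "a < x" "e x < u x" "0 \<le> u' x"
  then show "2 * C * u' x < u'' x"
    using ode_deriv2_gt_if_drift_le e_pos B_pos D_nonneg drift ode by blast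
qed

end

theorem theorem4p13:
  fixes Em :: ereal
    and r lam sigma a b rho del :: "real \<Rightarrow> real"
    and R :: real
    and y0 :: real
    and u u1 u2 :: "real \<Rightarrow> real"
    and eta1 eta2 :: "real \<Rightarrow> real"
  defines "E \<equiv> stateE Em"
    and "eta \<equiv> eta_fun R r lam del"
    and "ta \<equiv> atilde_fun R a rho lam b"
    and "d \<equiv> d_fun R b rho"
  assumes Em: "Em \<noteq> \<infinity>"
    and lip: "loc_lipschitz_on E r" "loc_lipschitz_on E lam" "loc_lipschitz_on E sigma"
        "loc_lipschitz_on E a" "loc_lipschitz_on E b" "loc_lipschitz_on E rho"
        "loc_lipschitz_on E del"
    and sigma_pos: "\<forall>y\<in>E. sigma y > 0"
    and b_nz: "\<forall>y\<in>E. b y \<noteq> 0"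
    and rho_range: "\<forall>y\<in>E. -1 \<le> rho y \<and> rho y \<le> 1"
    and R: "R > 0" "R \<noteq> 1"
    and y0: "y0 \<in> E"
    \<comment> \<open>u is a positive C^2 solution of the ODE on [y0, infinity)\<close>
    and u_d1: "\<forall>y\<ge>y0. (u has_real_derivative u1 y) (at y within {y0..})"
    and u_d2: "\<forall>y\<ge>y0. (u1 has_real_derivative u2 y) (at y within {y0..})"
    and u_pos: "\<forall>y\<ge>y0. u y > 0"
    and u_ode: "\<forall>y\<ge>y0. 0 = (1/2) * (b y)\<^sup>2 * u2 y + ta y * u1 y + eta y * u y - (u y)\<^sup>2
                          - d y * (u1 y)\<^sup>2 / u y"
    and u_lim: "((\<lambda>y. u y / eta y) \<longlongrightarrow> 1) at_top"
    \<comment> \<open>eta is C^2 on [y0, infinity), positive, Psi eta <= 1 and bar a <= 0\<close>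
    and eta_d1: "\<forall>y\<ge>y0. (eta has_real_derivative eta1 y) (at y within {y0..})"
    and eta_d2: "\<forall>y\<ge>y0. (eta1 has_real_derivative eta2 y) (at y within {y0..})"
    and eta_C2: "continuous_on {y0..} eta2"
    and eta_pos: "\<forall>y\<ge>y0. eta y > 0"
    and Psi_eta: "\<forall>y\<ge>y0. Psi_op b ta d eta eta1 eta2 y \<le> 1"
    and abar: "\<forall>y\<ge>y0. ta y / eta y + ((b y)\<^sup>2 - 2 * d y) * eta1 y / (eta y)\<^sup>2 \<le> 0"
  shows "((\<forall>\<^sub>F y in at_top. u y > eta y) \<or> (\<forall>\<^sub>F y in at_top. u y \<le> eta y))
     \<and> ((\<exists>C>0. (\<forall>y\<ge>y0. ta y / (b y)\<^sup>2 \<le> - C)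
              \<and> filterlim eta at_top at_top
              \<and> ((\<lambda>y. eta y * exp (- 2 * C * y)) \<longlongrightarrow> 0) at_top)
        \<longrightarrow> (\<forall>\<^sub>F y in at_top. u y \<le> eta y))"
proof -
  have inE: "y \<in> E" if "y0 \<le> y" for y
    using y0 that unfolding E_def stateE_def by (auto intro: order_less_le_trans)
  interpret ode_with_supersolution y0 "\<lambda>y. (b y)\<^sup>2" ta d u u1 u2 eta eta1 eta2
  proof
    fix x assume x: "y0 < x"
    have "at x within {y0..} = at x"
      using x by (intro at_within_interior) simp
    with x show "(u has_real_derivative u1 x) (at x)" "(u1 has_real_derivative u2 x) (at x)"
      "(eta has_real_derivative eta1 x) (at x)" "(eta1 has_real_derivative eta2 x) (at x)"
      using u_d1 u_d2 eta_d1 eta_d2 by (metis less_imp_le)+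
    show "0 < eta x" "0 < (b x)\<^sup>2"
      using eta_pos b_nz inE x by auto
    show "0 \<le> d x"
      using rho_range R inE x by (simp add: d_def d_fun_nonneg)
    show "0 = (1/2) * (b x)\<^sup>2 * u2 x + ta x * u1 x + eta x * u x - (u x)\<^sup>2 - d x * (u1 x)\<^sup>2 / u x"
      using u_ode x by simp
    show "(1/2) * (b x)\<^sup>2 * eta2 x + ta x * eta1 x - d x * (eta1 x)\<^sup>2 / eta x \<le> 0"
      using Psi_eta eta_pos x by (intro Psi_op_le_1_imp_supersolution) auto
  qed
  have "\<not> (\<forall>\<^sub>F y in at_top. u y > eta y)"
    if "C > 0" "\<forall>y\<ge>y0. ta y / (b y)\<^sup>2 \<le> - C" "filterlim eta at_top at_top"
      "((\<lambda>y. eta y * exp (- 2 * C * y)) \<longlongrightarrow> 0) at_top" for C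
    using that u_lim by (intro not_eventually_gt_if_drift_le) auto
  then show ?thesis
    using eventually_gt_or_eventually_le by blast
qed

end
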